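(* Let $d\ge 2$, $\alpha\in[0,1]$, and let $\rho_W$ be the Werner state on $\mathbb C^d\otimes\mathbb C^d$, \[ \rho_W=\alpha\binom{d+1}{2}^{-1}\Pi_+ + (1-\alpha)\binom{d}{2}^{-1}\Pi_-,\qquad \Pi_\pm=\tfrac12(\mathbb I\pm F), \] where $F=\sum_{i,j=1}^d|i\rangle\langle j|\otimes|j\rangle\langle i|$ is the swap operator. Let $p_n=\mathrm{Tr}[(\rho_W^{T_A})^n]$. Then $p_3<p_2^2$ if and only if $\alpha<1/2$, and this holds if and only if $\rho_W^{T_A}$ has a negative eigenvalue. (Consequently, since $\rho_W$ is separable for $\alpha\ge1/2$, the condition $p_3<p_2^2$ is necessary and sufficient for $\rho_W$ to be entangled.)
   Context: The partial transpose on the first factor $A$ is defined in the computational product basis by $(|k_A,k_B\rangle\langle l_A,l_B|)^{T_A}=|l_A,k_B\rangle\langle k_A,l_B|$. *)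

theory Defs
  imports Complex_Main "Jordan_Normal_Form.Char_Poly"
begin

text \<open>Operators on C^d (x) C^d are (d*d) x (d*d) complex matrices; the product basis
  vector |a,b> (a,b < d) has index a*d + b, i.e. the first factor A is index div d
  and the second factor B is index mod d.\<close>

definition swap_op :: "nat \<Rightarrow> complex mat" where
  "swap_op d = mat (d*d) (d*d)
     (\<lambda>(r,c). if r div d = c mod d \<and> r mod d = c div d then 1 else 0)"

definition Pi_plus :: "nat \<Rightarrow> complex mat" where
  "Pi_plus d = (1/2 :: complex) \<cdot>\<^sub>m (1\<^sub>m (d*d) + swap_op d)"

definition Pi_minus :: "nat \<Rightarrow> complex mat" where
  "Pi_minus d = (1/2 :: complex) \<cdot>\<^sub>m (1\<^sub>m (d*d) - swap_op d)"

definition werner :: "nat \<Rightarrow> real \<Rightarrow> complex mat" where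
  "werner d \<alpha> =
     (complex_of_real (\<alpha> / real (Suc d choose 2))) \<cdot>\<^sub>m Pi_plus d
   + (complex_of_real ((1 - \<alpha>) / real (d choose 2))) \<cdot>\<^sub>m Pi_minus d"

text \<open>Partial transpose on the first factor:
  (|kA,kB><lA,lB|)^{T_A} = |lA,kB><kA,lB|, i.e.
  M^{T_A}((x,y),(u,v)) = M((u,y),(x,v)).\<close>
definition partial_transpose_A :: "nat \<Rightarrow> complex mat \<Rightarrow> complex mat" where
  "partial_transpose_A d M = mat (d*d) (d*d)
     (\<lambda>(r,c). M $$ ((c div d) * d + r mod d, (r div d) * d + c mod d))"

definition mat_trace :: "complex mat \<Rightarrow> complex" where
  "mat_trace A = (\<Sum>i<dim_row A. A $$ (i,i))"

definition werner_moment :: "nat \<Rightarrow> real \<Rightarrow> nat \<Rightarrow> complex" where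
  "werner_moment d \<alpha> n = mat_trace ((partial_transpose_A d (werner d \<alpha>)) ^\<^sub>m n)"

end

theory Submission
  imports Defs
begin

text \<open>With \<open>\<Phi> = \<Sum>\<^sub>i |i,i\<rangle>\<close>, the partial transpose of the swap operator is the rank-one
  operator \<open>|\<Phi>\<rangle>\<langle>\<Phi>|\<close>, so \<open>\<rho>\<^sub>W\<^sup>T\<^sup>A\<close> lies in the commutative algebra spanned by \<open>\<one>\<close> and
  \<open>|\<Phi>\<rangle>\<langle>\<Phi>|\<close>. Such an operator has one eigenvalue \<open>y\<close> on \<open>\<Phi>\<close> and one eigenvalue \<open>x\<close> of
  multiplicity \<open>d\<^sup>2 - 1\<close> on \<open>\<Phi>\<^sup>\<bottom>\<close>, hence \<open>p\<^sub>n = (d\<^sup>2 - 1) x\<^sup>n + y\<^sup>n\<close>. For the Werner state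
  \<open>x = (d + 1 - 2\<alpha>) / (d (d\<^sup>2 - 1)) > 0\<close> and \<open>y = (2\<alpha> - 1) / d\<close>, and with \<open>\<mu> = d\<^sup>2 - 1\<close> and
  \<open>\<mu> x + y = 1\<close> one has the identity \<open>p\<^sub>2\<^sup>2 - p\<^sub>3 = \<mu> x (-y) (x - y)\<^sup>2\<close>. Both
  conditions therefore reduce to \<open>y < 0\<close>, i.e. to \<open>\<alpha> < 1/2\<close>.\<close>

lemma card_diagonal_indices: "card {k. k < d*d \<and> k div d = k mod d} = d"
proof -
  have "{k. k < d*d \<and> k div d = k mod d} = (\<lambda>i. i*d + i) ` {..<d}"
  proof (intro equalityI subsetI)
    fix k assume "k \<in> {k. k < d*d \<and> k div d = k mod d}"
    hence k: "k < d*d" "k div d = k mod d" by auto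
    hence "k = (k div d)*d + k div d" by (metis div_mult_mod_eq)
    moreover have "k div d < d" using k(1) by (metis less_mult_imp_div_less)
    ultimately show "k \<in> (\<lambda>i. i*d + i) ` {..<d}" by blast
  next
    fix k assume "k \<in> (\<lambda>i. i*d + i) ` {..<d}"
    then obtain i where i: "i < d" "k = i*d + i" by auto
    have "i*d + i < Suc i * d" using i by simp
    also have "\<dots> \<le> d*d" using i by (intro mult_le_mono1) simp
    finally show "k \<in> {k. k < d*d \<and> k div d = k mod d}" using i by auto
  qed
  moreover have "inj_on (\<lambda>i. i*d + i) {..<d}"
    by (rule inj_on_inverseI[where g="\<lambda>k. k div d"]) simp
  ultimately show ?thesis by (simp add: card_image)
qed

lemma sum_diagonal_indices:
  "(\<Sum>k<d*d. if k div d = k mod d then c else 0) = of_nat d * (c :: 'a :: comm_semiring_1)"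
proof -
  have "(\<Sum>k<d*d. if k div d = k mod d then c else 0) = (\<Sum>k\<in>{k\<in>{..<d*d}. k div d = k mod d}. c)"
    by (rule sum.inter_filter[symmetric]) simp
  also have "{k\<in>{..<d*d}. k div d = k mod d} = {k. k < d*d \<and> k div d = k mod d}" by auto
  finally show ?thesis by (simp add: card_diagonal_indices)
qed

lemma product_index:
  assumes "u < d" "w < (d::nat)"
  shows "u*d + w < d*d" "(u*d + w) div d = u" "(u*d + w) mod d = w"
proof -
  have "u*d + w < Suc u * d" using assms by simp
  also have "\<dots> \<le> d*d" using assms by (intro mult_le_mono1) simp
  finally show "u*d + w < d*d" .
  show "(u*d + w) div d = u" "(u*d + w) mod d = w" using assms by auto
qed

text \<open>\<open>iso_op d x y = x \<one> + ((y - x) / d) |\<Phi>\<rangle>\<langle>\<Phi>|\<close>; since \<open>\<langle>\<Phi>|\<Phi>\<rangle> = d\<close>, it acts as \<open>y\<close>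
  on \<open>\<Phi>\<close> and as \<open>x\<close> on \<open>\<Phi>\<^sup>\<bottom>\<close>.\<close>
definition iso_op :: "nat \<Rightarrow> complex \<Rightarrow> complex \<Rightarrow> complex mat" where
  "iso_op d x y = mat (d*d) (d*d) (\<lambda>(r,c). (if r = c then x else 0)
      + (if r div d = r mod d \<and> c div d = c mod d then (y - x) / of_nat d else 0))"

lemma iso_op_carrier [simp]: "dim_row (iso_op d x y) = d*d" "dim_col (iso_op d x y) = d*d"
  by (simp_all add: iso_op_def)

lemma iso_op_mult:
  assumes "d > 0"
  shows "iso_op d x y * iso_op d x' y' = iso_op d (x*x') (y*y')"
proof (rule eq_matI)
  fix r c assume "r < dim_row (iso_op d (x*x') (y*y'))" "c < dim_col (iso_op d (x*x') (y*y'))"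
  hence r: "r < d*d" and c: "c < d*d" by simp_all
  define D where "D = (\<lambda>k. k div d = k mod d)"
  define b where "b = (y - x) / of_nat d"
  define b' where "b' = (y' - x') / of_nat d"
  define P where "P = (D r \<and> D c)"
  have "(iso_op d x y * iso_op d x' y') $$ (r,c) = (\<Sum>k<d*d.
        ((if r = k then x else 0) + (if D r \<and> D k then b else 0))
      * ((if k = c then x' else 0) + (if D k \<and> D c then b' else 0)))"
    using r c unfolding D_def b_def b'_def by (simp add: iso_op_def scalar_prod_def atLeast0LessThan)
  also have "\<dots> = (\<Sum>k<d*d. (if r = c then (if k = r then x*x' else 0) else 0) + (if P then
      (if k = r then x*b' else 0) + (if k = c then b*x' else 0) + (if D k then b*b' else 0) else 0))"
    by (rule sum.cong) (auto simp: algebra_simps P_def)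
  also have "\<dots> = (if r = c then x*x' else 0) + (if P then x*b' + b*x' + of_nat d * (b*b') else 0)"
    using r c sum_diagonal_indices[of d "b*b'"]
    by (cases "r = c"; cases P) (simp_all add: sum.distrib D_def)
  also have "x*b' + b*x' + of_nat d * (b*b') = (y*y' - x*x') / of_nat d"
    using assms by (simp add: b_def b'_def field_simps)
  also have "(if r = c then x*x' else 0) + (if P then (y*y' - x*x') / of_nat d else 0)
      = iso_op d (x*x') (y*y') $$ (r,c)"
    using r c by (simp add: iso_op_def D_def P_def)
  finally show "(iso_op d x y * iso_op d x' y') $$ (r,c) = iso_op d (x*x') (y*y') $$ (r,c)" .
qed simp_all

lemma iso_op_power:
  assumes "d > 0"
  shows "iso_op d x y ^\<^sub>m n = iso_op d (x^n) (y^n)"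
proof (induction n)
  case 0
  show ?case by (rule eq_matI) (auto simp: iso_op_def)
next
  case (Suc n)
  then show ?case by (simp add: iso_op_mult[OF assms] mult.commute)
qed

lemma trace_iso_op:
  assumes "d > 0"
  shows "mat_trace (iso_op d x y) = (of_nat (d*d) - 1) * x + y"
proof -
  have "mat_trace (iso_op d x y)
      = (\<Sum>k<d*d. x + (if k div d = k mod d then (y - x) / of_nat d else 0))"
    by (simp add: mat_trace_def iso_op_def)
  also have "\<dots> = of_nat (d*d) * x + (y - x)"
    using assms by (simp add: sum.distrib sum_diagonal_indices)
  finally show ?thesis by (simp add: algebra_simps)
qed

lemma trace_iso_op_power:
  assumes "d > 0"
  shows "mat_trace (iso_op d x y ^\<^sub>m n) = (of_nat (d*d) - 1) * x^n + y^n"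
  using assms by (simp add: iso_op_power trace_iso_op)

lemma iso_op_mult_vec:
  assumes "v \<in> carrier_vec (d*d)" "r < d*d"
  shows "(iso_op d x y *\<^sub>v v) $ r = x * v $ r + (if r div d = r mod d
      then (y - x) / of_nat d * (\<Sum>k<d*d. if k div d = k mod d then v $ k else 0) else 0)"
proof -
  have "(iso_op d x y *\<^sub>v v) $ r = (\<Sum>k<d*d. ((if r = k then x else 0) +
      (if r div d = r mod d \<and> k div d = k mod d then (y - x) / of_nat d else 0)) * v $ k)"
    using assms by (simp add: iso_op_def scalar_prod_def atLeast0LessThan)
  also have "\<dots> = (\<Sum>k<d*d. (if k = r then x * v $ k else 0) + (if r div d = r mod d
      then (y - x) / of_nat d * (if k div d = k mod d then v $ k else 0) else 0))"
    by (rule sum.cong) (auto simp: algebra_simps)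
  finally show ?thesis using assms(2) by (simp add: sum.distrib sum_distrib_left)
qed

lemma eigenvalue_iso_op_cases:
  assumes "d > 0" "eigenvalue (iso_op d x y) \<theta>"
  shows "\<theta> = x \<or> \<theta> = y"
proof (rule ccontr)
  assume ne: "\<not> (\<theta> = x \<or> \<theta> = y)"
  from assms(2) obtain v where v: "v \<in> carrier_vec (d*d)" "v \<noteq> 0\<^sub>v (d*d)"
      "iso_op d x y *\<^sub>v v = \<theta> \<cdot>\<^sub>v v"
    unfolding eigenvalue_def eigenvector_def by auto
  define D where "D = (\<lambda>k::nat. k div d = k mod d)"
  define s where "s = (\<Sum>k<d*d. if D k then v $ k else 0)"
  have entry: "(\<theta> - x) * v $ r = (if D r then (y - x) / of_nat d * s else 0)" if "r < d*d" for r
    using iso_op_mult_vec[OF v(1) that, of x y] arg_cong[OF v(3), of "\<lambda>w. w $ r"] that v(1)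
    by (simp add: D_def s_def algebra_simps)
  have "(\<theta> - x) * s = (\<Sum>k<d*d. if D k then (\<theta> - x) * v $ k else 0)"
    unfolding s_def sum_distrib_left by (rule sum.cong) simp_all
  also have "\<dots> = (\<Sum>k<d*d. if D k then (y - x) / of_nat d * s else 0)"
    by (rule sum.cong) (simp_all add: entry)
  also have "\<dots> = (y - x) * s"
    using assms(1) sum_diagonal_indices[of d "(y - x) / of_nat d * s"] by (simp add: D_def)
  finally have "s = 0" using ne by simp
  have "v $ r = 0" if "r < d*d" for r
    using entry[OF that] ne \<open>s = 0\<close> by (cases "D r") auto
  hence "v = 0\<^sub>v (d*d)" using v(1) by (intro eq_vecI) auto
  with v(2) show False ..
qed

lemma eigenvalue_iso_op_Phi:
  assumes "d > 0"
  shows "eigenvalue (iso_op d x y) y"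
proof -
  define \<Phi> where "\<Phi> = vec (d*d) (\<lambda>k. if k div d = k mod d then (1::complex) else 0)"
  have \<Phi>: "\<Phi> \<in> carrier_vec (d*d)" by (simp add: \<Phi>_def)
  have "\<Phi> $ 0 = 1" using assms by (simp add: \<Phi>_def)
  hence "\<Phi> \<noteq> 0\<^sub>v (d*d)" using assms by auto
  moreover have "iso_op d x y *\<^sub>v \<Phi> = y \<cdot>\<^sub>v \<Phi>"
  proof (rule eq_vecI)
    fix i assume "i < dim_vec (y \<cdot>\<^sub>v \<Phi>)"
    hence i: "i < d*d" by (simp add: \<Phi>_def)
    have "(\<Sum>k<d*d. if k div d = k mod d then \<Phi> $ k else 0)
        = (\<Sum>k<d*d. if k div d = k mod d then 1 else 0)"
      by (rule sum.cong) (simp_all add: \<Phi>_def)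
    also have "\<dots> = of_nat d" using sum_diagonal_indices[of d 1] by simp
    finally show "(iso_op d x y *\<^sub>v \<Phi>) $ i = (y \<cdot>\<^sub>v \<Phi>) $ i"
      using iso_op_mult_vec[OF \<Phi> i, of x y] assms i by (simp add: \<Phi>_def)
  qed (simp add: \<Phi>_def)
  ultimately show ?thesis using \<Phi> unfolding eigenvalue_def eigenvector_def by auto
qed

lemma iso_op_negative_eigenvalue_iff:
  assumes "d > 0" "x > 0"
  shows "(\<exists>t::real. t < 0 \<and> eigenvalue (iso_op d (of_real x) (of_real y)) (of_real t)) \<longleftrightarrow> y < 0"
proof
  assume "\<exists>t::real. t < 0 \<and> eigenvalue (iso_op d (of_real x) (of_real y)) (of_real t)"
  then obtain t :: real where "t < 0" "eigenvalue (iso_op d (of_real x) (of_real y)) (of_real t)"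
    by blast
  with eigenvalue_iso_op_cases[OF assms(1)] assms(2) show "y < 0" by force
next
  assume "y < 0"
  with eigenvalue_iso_op_Phi[OF assms(1)]
  show "\<exists>t::real. t < 0 \<and> eigenvalue (iso_op d (of_real x) (of_real y)) (of_real t)" by blast
qed

lemma partial_transpose_werner_iso_op:
  fixes \<alpha> :: real
  assumes "d > 0"
  defines "A \<equiv> \<alpha> / real (Suc d choose 2)" and "B \<equiv> (1 - \<alpha>) / real (d choose 2)"
  shows "partial_transpose_A d (werner d \<alpha>)
      = iso_op d (of_real ((A + B) / 2)) (of_real ((A + B) / 2 + real d * (A - B) / 2))"
    (is "_ = ?G")
proof (rule eq_matI)
  fix r c assume "r < dim_row ?G" "c < dim_col ?G"
  hence r: "r < d*d" and c: "c < d*d" by simp_all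
  have div: "r div d < d" "c div d < d" using r c by (metis less_mult_imp_div_less)+
  have mod: "r mod d < d" "c mod d < d" using assms by auto
  define \<rho> where "\<rho> = (c div d) * d + r mod d"
  define \<sigma> where "\<sigma> = (r div d) * d + c mod d"
  have \<rho>: "\<rho> < d*d" "\<rho> div d = c div d" "\<rho> mod d = r mod d"
    unfolding \<rho>_def using product_index[OF div(2) mod(1)] by simp_all
  have \<sigma>: "\<sigma> < d*d" "\<sigma> div d = r div d" "\<sigma> mod d = c mod d"
    unfolding \<sigma>_def using product_index[OF div(1) mod(2)] by simp_all
  have same: "(\<rho> = \<sigma>) = (r = c)"
  proof
    assume "\<rho> = \<sigma>"
    hence "c div d = r div d" "r mod d = c mod d" using \<rho>(2,3) \<sigma>(2,3) by simp_all
    thus "r = c" by (metis div_mult_mod_eq)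
  qed (simp add: \<rho>_def \<sigma>_def)
  have swapped: "(\<rho> div d = \<sigma> mod d \<and> \<rho> mod d = \<sigma> div d) = (r div d = r mod d \<and> c div d = c mod d)"
    using \<rho>(2,3) \<sigma>(2,3) by auto
  have "partial_transpose_A d (werner d \<alpha>) $$ (r,c) = werner d \<alpha> $$ (\<rho>, \<sigma>)"
    using r c by (simp add: partial_transpose_A_def \<rho>_def \<sigma>_def)
  also have "\<dots> = of_real A * (1/2 * ((if r = c then 1 else 0)
        + (if r div d = r mod d \<and> c div d = c mod d then 1 else 0)))
      + of_real B * (1/2 * ((if r = c then 1 else 0)
        - (if r div d = r mod d \<and> c div d = c mod d then 1 else 0)))"
    using \<rho>(1) \<sigma>(1) unfolding same[symmetric] swapped[symmetric]
    by (simp add: werner_def Pi_plus_def Pi_minus_def swap_op_def A_def B_def)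
  also have "\<dots> = ?G $$ (r,c)"
    using r c assms(1)
    by (cases "r = c"; cases "r div d = r mod d"; cases "c div d = c mod d")
      (simp_all add: iso_op_def field_simps)
  finally show "partial_transpose_A d (werner d \<alpha>) $$ (r,c) = ?G $$ (r,c)" .
qed (simp_all add: partial_transpose_A_def)

lemma real_choose_two: "real (n choose 2) = real n * (real n - 1) / 2"
  by (induction n) (simp_all add: numeral_2_eq_2 field_simps)

lemma werner_partial_transpose_eigenvalues:
  fixes d :: nat and \<alpha> :: real
  assumes "d \<ge> 2"
  defines "A \<equiv> \<alpha> / real (Suc d choose 2)" and "B \<equiv> (1 - \<alpha>) / real (d choose 2)"
  shows "(A + B) / 2 = (real d + 1 - 2*\<alpha>) / (real d * (real d - 1) * (real d + 1))"
    and "(A + B) / 2 + real d * (A - B) / 2 = (2*\<alpha> - 1) / real d"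
proof -
  have nz: "real d \<noteq> 0" "real d + 1 \<noteq> 0" "real d - 1 \<noteq> 0" using assms by auto
  have A: "A = 2*\<alpha> / (real d * (real d + 1))"
    unfolding A_def real_choose_two by (simp add: field_simps)
  have B: "B = 2*(1 - \<alpha>) / (real d * (real d - 1))"
    unfolding B_def real_choose_two by (simp add: field_simps)
  show "(A + B) / 2 = (real d + 1 - 2*\<alpha>) / (real d * (real d - 1) * (real d + 1))"
    unfolding A B using nz by (simp add: divide_simps) (simp add: algebra_simps)
  show "(A + B) / 2 + real d * (A - B) / 2 = (2*\<alpha> - 1) / real d"
    unfolding A B using nz by (simp add: divide_simps) (simp add: algebra_simps)
qed

lemma partial_transpose_werner:
  assumes "d \<ge> 2"
  shows "partial_transpose_A d (werner d \<alpha>) = iso_op d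
      (of_real ((real d + 1 - 2*\<alpha>) / (real d * (real d - 1) * (real d + 1))))
      (of_real ((2*\<alpha> - 1) / real d))"
proof -
  have "d > 0" using assms by simp
  from partial_transpose_werner_iso_op[OF this, of \<alpha>] show ?thesis
    unfolding werner_partial_transpose_eigenvalues(2)[OF assms]
    unfolding werner_partial_transpose_eigenvalues(1)[OF assms] .
qed

lemma weighted_cube_sum_lt_square_iff:
  fixes \<mu> x y :: real
  assumes "\<mu> > 0" "x > 0" "\<mu> * x + y = 1"
  shows "\<mu>*x^3 + y^3 < (\<mu>*x^2 + y^2)^2 \<longleftrightarrow> y < 0"
proof -
  have "(\<mu>*x^2 + y^2)^2 - (\<mu>*x^3 + y^3) * (\<mu>*x + y) = (\<mu>*x) * (-y) * (x - y)^2"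
    by (simp add: power2_eq_square power3_eq_cube algebra_simps)
  hence gap: "(\<mu>*x^2 + y^2)^2 - (\<mu>*x^3 + y^3) = (\<mu>*x) * (-y) * (x - y)^2"
    using assms(3) by simp
  have "\<mu>*x > 0" using assms by simp
  show ?thesis
  proof
    assume "\<mu>*x^3 + y^3 < (\<mu>*x^2 + y^2)^2"
    with gap have "(\<mu>*x) * ((-y) * (x - y)^2) > 0" by (simp add: mult.assoc)
    with \<open>\<mu>*x > 0\<close> have "(-y) * (x - y)^2 > 0" using zero_less_mult_pos by blast
    then show "y < 0" by (metis mult_nonpos_nonneg zero_le_power2 neg_le_0_iff_le not_less)
  next
    assume "y < 0"
    with assms(2) have "-y > 0" "(x - y)^2 > 0" by simp_all
    with \<open>\<mu>*x > 0\<close> have "(\<mu>*x) * (-y) * (x - y)^2 > 0" by (metis mult_pos_pos)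
    with gap show "\<mu>*x^3 + y^3 < (\<mu>*x^2 + y^2)^2" by simp
  qed
qed

theorem mainTheorem4:
  fixes d :: nat and \<alpha> :: real
  assumes "d \<ge> 2" and "0 \<le> \<alpha>" and "\<alpha> \<le> 1"
  shows "(Re (werner_moment d \<alpha> 3) < (Re (werner_moment d \<alpha> 2))^2 \<longleftrightarrow> \<alpha> < 1/2)
       \<and> (\<alpha> < 1/2 \<longleftrightarrow>
            (\<exists>x::real. x < 0 \<and> eigenvalue (partial_transpose_A d (werner d \<alpha>)) (complex_of_real x)))"
proof -
  define x where "x = (real d + 1 - 2*\<alpha>) / (real d * (real d - 1) * (real d + 1))"
  define y where "y = (2*\<alpha> - 1) / real d"
  define \<mu> where "\<mu> = real d * real d - 1"
  have d: "d > 0" "real d \<ge> 2" using assms(1) by auto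
  have "\<mu> > 0" using d mult_mono[of 2 "real d" 2 "real d"] by (simp add: \<mu>_def)
  have "x > 0" unfolding x_def using d assms(3) by (intro divide_pos_pos mult_pos_pos) auto
  have "real d \<noteq> 0" "real d + 1 \<noteq> 0" "real d - 1 \<noteq> 0" using d by auto
  then have "\<mu> * x + y = 1"
    unfolding \<mu>_def x_def y_def by (simp add: divide_simps) (simp add: algebra_simps)
  have "y < 0 \<longleftrightarrow> \<alpha> < 1/2" using d by (auto simp: y_def divide_less_0_iff)
  have pt: "partial_transpose_A d (werner d \<alpha>) = iso_op d (of_real x) (of_real y)"
    unfolding x_def y_def by (rule partial_transpose_werner[OF assms(1)])
  have moment: "Re (werner_moment d \<alpha> n) = \<mu> * x^n + y^n" for n
    using d(1) by (simp add: werner_moment_def pt trace_iso_op_power \<mu>_def)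
  show ?thesis
    unfolding moment pt iso_op_negative_eigenvalue_iff[OF d(1) \<open>x > 0\<close>]
    using weighted_cube_sum_lt_square_iff[OF \<open>\<mu> > 0\<close> \<open>x > 0\<close> \<open>\<mu> * x + y = 1\<close>]
      \<open>y < 0 \<longleftrightarrow> \<alpha> < 1/2\<close>
    by blast
qed

end
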